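(* Let $G=(V,E)$ be an undirected, unweighted, 2-edge-connected graph and let $T$ be a spanning tree of $G$. Then for every edge $e$ of $T$ there exists a set $C\subseteq S_e$ with $|C|\le 6$ such that for every swap edge $f\in S_e$, $C$ contains an edge that is critical for $f$.
   Context: $d_T(u,v)$ denotes the number of edges on the unique path between $u$ and $v$ in the tree $T$. For an edge $e$ of $T$, let $X$ and $Y=V\setminus X$ be the vertex sets of the two connected components of $T-e$. The set $S_e$ of swap edges of $e$ consists of all edges of $E\setminus\{e\}$ with one endpoint in $X$ and the other in $Y$; each swap edge is written $(u,v)$ with $u\in X$, $v\in Y$. For $f=(x,y)\in S_e$, let $T_{e/f}$ be the tree obtained from $T$ by replacing $e$ with $f$; for $g=(a,b)\in S_e$ one has $d_{T_{e/f}}(a,b)=d_T(x,a)+1+d_T(b,y)$. An edge $g=(a,b)\in S_e$ is called critical for $f=(x,y)\in S_e$ if $$d_T(x,a)+1+d_T(b,y)=\max_{(a'',b'')\in S_e}\big(d_T(x,a'')+1+d_T(b'',y)\big),$$ i.e. $g$ attains the maximum stretch of $T_{e/f}$ over the swap edges of $e$. *)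

theory Defs
  imports Main
begin

definition graph :: "'a set \<Rightarrow> 'a set set \<Rightarrow> bool" where
  "graph V E \<longleftrightarrow> finite V \<and> (\<forall>e\<in>E. \<exists>u v. e = {u, v} \<and> u \<noteq> v \<and> u \<in> V \<and> v \<in> V)"

definition walk :: "'a set set \<Rightarrow> 'a list \<Rightarrow> bool" where
  "walk E xs \<longleftrightarrow> xs \<noteq> [] \<and> (\<forall>i. Suc i < length xs \<longrightarrow> {xs ! i, xs ! Suc i} \<in> E)"

definition reachable :: "'a set set \<Rightarrow> 'a \<Rightarrow> 'a \<Rightarrow> bool" where
  "reachable E u v \<longleftrightarrow> (\<exists>xs. walk E xs \<and> hd xs = u \<and> last xs = v)"

definition connected_graph :: "'a set \<Rightarrow> 'a set set \<Rightarrow> bool" where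
  "connected_graph V E \<longleftrightarrow> (\<forall>u\<in>V. \<forall>v\<in>V. reachable E u v)"

definition two_edge_connected :: "'a set \<Rightarrow> 'a set set \<Rightarrow> bool" where
  "two_edge_connected V E \<longleftrightarrow> connected_graph V E \<and> (\<forall>e\<in>E. connected_graph V (E - {e}))"

definition spanning_tree :: "'a set \<Rightarrow> 'a set set \<Rightarrow> 'a set set \<Rightarrow> bool" where
  "spanning_tree V E T \<longleftrightarrow> T \<subseteq> E \<and> connected_graph V T \<and>
     (\<forall>e\<in>T. \<not> connected_graph V (T - {e}))"

definition dist :: "'a set set \<Rightarrow> 'a \<Rightarrow> 'a \<Rightarrow> nat" where
  "dist E u v = (LEAST n. \<exists>xs. walk E xs \<and> hd xs = u \<and> last xs = v \<and> length xs = Suc n)"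

text \<open>For the tree edge e = {p,q}: X is the vertex set of the component of T - e containing p,
  Y = V - X.  Swap edges are recorded as oriented pairs (u,v) with u in X and v in Y.\<close>

definition side :: "'a set \<Rightarrow> 'a set set \<Rightarrow> 'a \<Rightarrow> 'a \<Rightarrow> 'a set" where
  "side V T p q = {v\<in>V. reachable (T - {{p, q}}) p v}"

definition swap_edges :: "'a set \<Rightarrow> 'a set set \<Rightarrow> 'a set set \<Rightarrow> 'a \<Rightarrow> 'a \<Rightarrow> ('a \<times> 'a) set" where
  "swap_edges V E T p q = {(u, v). u \<in> side V T p q \<and> v \<in> V - side V T p q \<and>
       {u, v} \<in> E - {{p, q}}}"

definition critical :: "'a set \<Rightarrow> 'a set set \<Rightarrow> 'a set set \<Rightarrow> 'a \<Rightarrow> 'a \<Rightarrow> 'a \<times> 'a \<Rightarrow> 'a \<times> 'a \<Rightarrow> bool" where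
  "critical V E T p q g f \<longleftrightarrow>
     (case f of (x, y) \<Rightarrow> case g of (a, b) \<Rightarrow>
        dist T x a + 1 + dist T b y =
        Max ((\<lambda>(a'', b''). dist T x a'' + 1 + dist T b'' y) ` swap_edges V E T p q))"

end

theory Submission
  imports Defs
begin

text \<open>For a swap edge \<open>f = (x, y)\<close> the stretch of \<open>g = (a, b)\<close> is \<open>d(x,a) + 1 + d(b,y)\<close>.
  The four-point condition of tree metrics shows that this stretch is maximised by one of the two
  edges of any pair \<open>(a,b), (a',b')\<close> maximising \<open>d(x,a) + d(x,a') + d(b,b')\<close>. So it suffices that
  three pairs serve as such maximisers for every \<open>x\<close>. This holds for the upper envelope \<open>M\<close> of any
  finite family of functions \<open>x \<mapsto> d(x,s\<^sub>i) + d(x,t\<^sub>i) + w\<^sub>i\<close> on a tree: take \<open>z\<close> minimising \<open>M\<close>,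
  a member \<open>l\<close> attaining \<open>M z\<close> with \<open>d(s\<^sub>l,t\<^sub>l) + w\<^sub>l\<close> maximal, and members attaining \<open>M\<close> at
  \<open>s\<^sub>l\<close> and at \<open>t\<^sub>l\<close>. Along an edge leaving \<open>z\<close> on which every maximiser increases, \<open>M\<close> grows
  with slope 2, and one maximiser covers the whole far side of that edge.\<close>

lemma walk_Nil [simp]: "\<not> walk E []"
  by (simp add: walk_def)

lemma walk_single [simp]: "walk E [x]"
  by (simp add: walk_def)

lemma walk_Cons_Cons: "walk E (x # y # xs) \<longleftrightarrow> {x, y} \<in> E \<and> walk E (y # xs)"
  unfolding walk_def by (auto simp: nth_Cons split: nat.splits)

lemma walk_ConsD: "walk E (x # xs) \<Longrightarrow> xs \<noteq> [] \<Longrightarrow> walk E xs"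
  by (cases xs) (auto simp: walk_Cons_Cons)

lemma walk_append:
  assumes "walk E xs" "walk E ys" "last xs = hd ys"
  shows "walk E (xs @ tl ys)"
  using assms
proof (induction xs)
  case (Cons x xs)
  show ?case
  proof (cases xs)
    case Nil
    then show ?thesis using Cons.prems by (cases ys) auto
  next
    case (Cons y zs)
    then show ?thesis using Cons.IH Cons.prems walk_ConsD by (fastforce simp: walk_Cons_Cons)
  qed
qed simp

lemma walk_rev: "walk E xs \<Longrightarrow> walk E (rev xs)"
proof (induction xs)
  case (Cons x xs)
  show ?case
  proof (cases xs)
    case (Cons y zs)
    then have "walk E (rev xs)" "{y, x} \<in> E"
      using Cons.IH Cons.prems walk_ConsD by (auto simp: walk_Cons_Cons insert_commute)
    then show ?thesis
      using walk_append[of E "rev xs" "[y, x]"] \<open>xs = y # zs\<close> by (simp add: walk_Cons_Cons)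
  qed simp
qed simp

lemma walk_take: "walk E xs \<Longrightarrow> 0 < n \<Longrightarrow> walk E (take n xs)"
  unfolding walk_def by auto

lemma walk_drop: "walk E xs \<Longrightarrow> n < length xs \<Longrightarrow> walk E (drop n xs)"
  unfolding walk_def by auto

lemma walk_nth_edge: "walk E xs \<Longrightarrow> Suc i < length xs \<Longrightarrow> {xs ! i, xs ! Suc i} \<in> E"
  unfolding walk_def by auto

lemma walk_leaves_set:
  assumes "walk E xs" "hd xs \<in> A" "last xs \<notin> A"
  shows "\<exists>i. Suc i < length xs \<and> xs ! i \<in> A \<and> xs ! Suc i \<notin> A"
  using assms
proof (induction xs)
  case (Cons x xs)
  have "xs \<noteq> []" using Cons.prems(2,3) by auto
  then obtain y ys where xs: "xs = y # ys" by (meson neq_Nil_conv)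
  show ?case
  proof (cases "y \<in> A")
    case True
    have "walk E xs" using Cons.prems(1) \<open>xs \<noteq> []\<close> by (rule walk_ConsD)
    moreover have "hd xs \<in> A" "last xs \<notin> A" using True xs Cons.prems(3) by simp_all
    ultimately obtain i where "Suc i < length xs" "xs ! i \<in> A" "xs ! Suc i \<notin> A"
      using Cons.IH by blast
    then show ?thesis by (intro exI[of _ "Suc i"]) simp
  next
    case False
    then show ?thesis using Cons.prems(2) xs by (intro exI[of _ 0]) simp
  qed
qed simp

lemma hd_last_append_tl:
  assumes "xs \<noteq> []" "ys \<noteq> []" "last xs = hd ys"
  shows "hd (xs @ tl ys) = hd xs" "last (xs @ tl ys) = last ys"
  using assms by (cases ys; simp add: last_append)+

lemma reachable_refl [simp]: "reachable E u u"
  unfolding reachable_def by (rule exI[of _ "[u]"]) simp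

lemma reachable_sym: "reachable E u v \<Longrightarrow> reachable E v u"
  unfolding reachable_def by (metis walk_rev hd_rev last_rev)

lemma reachable_trans: "reachable E u v \<Longrightarrow> reachable E v w \<Longrightarrow> reachable E u w"
  unfolding reachable_def by (metis walk_append hd_last_append_tl walk_Nil)

lemma reachable_edge: "reachable E u a \<Longrightarrow> {a, b} \<in> E \<Longrightarrow> reachable E u b"
  by (rule reachable_trans[of _ _ a]) (auto simp: reachable_def walk_Cons_Cons intro!: exI[of _ "[a, b]"])

lemma reachable_along_walk:
  assumes "walk E xs" "reachable E' u (hd xs)"
    and "\<And>a b. {a, b} \<in> E \<Longrightarrow> reachable E' u a \<Longrightarrow> reachable E' u b"
  shows "reachable E' u (last xs)"
proof -
  have "reachable E' u (xs ! k)" if "k < length xs" for k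
    using that
  proof (induction k)
    case 0
    then show ?case using assms(1,2) by (cases xs) auto
  next
    case (Suc k)
    then show ?case using walk_nth_edge[OF assms(1)] assms(3) by auto
  qed
  then show ?thesis using assms(1) by (simp add: last_conv_nth walk_def)
qed

lemma dist_le_walk:
  assumes "walk E xs" "hd xs = u" "last xs = v"
  shows "dist E u v + 1 \<le> length xs"
proof -
  obtain n where n: "length xs = Suc n" using assms(1) by (cases xs) auto
  have "dist E u v \<le> n" unfolding dist_def by (rule Least_le) (use assms n in blast)
  then show ?thesis using n by simp
qed

lemma shortest_walk:
  assumes "reachable E u v"
  obtains xs where "walk E xs" "hd xs = u" "last xs = v" "length xs = Suc (dist E u v)"
proof -
  obtain xs where xs: "walk E xs" "hd xs = u" "last xs = v" using assms unfolding reachable_def by blast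
  then obtain n where "length xs = Suc n" by (cases xs) auto
  then have "\<exists>n xs. walk E xs \<and> hd xs = u \<and> last xs = v \<and> length xs = Suc n" using xs by blast
  from LeastI_ex[OF this] show ?thesis unfolding dist_def[symmetric] using that by blast
qed

locale tree =
  fixes V :: "'a set" and T :: "'a set set"
  assumes graph: "graph V T"
    and connected: "connected_graph V T"
    and minimally_connected: "\<And>e. e \<in> T \<Longrightarrow> \<not> connected_graph V (T - {e})"
begin

abbreviation d :: "'a \<Rightarrow> 'a \<Rightarrow> nat" where "d \<equiv> dist T"

lemma finite_vertices: "finite V"
  using graph unfolding graph_def by blast

lemma edge_vertices: "{u, v} \<in> T \<Longrightarrow> u \<noteq> v \<and> u \<in> V \<and> v \<in> V"
  using graph unfolding graph_def by (metis doubleton_eq_iff)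

lemma reachable_vertices: "u \<in> V \<Longrightarrow> v \<in> V \<Longrightarrow> reachable T u v"
  using connected unfolding connected_graph_def by blast

lemma dist_self [simp]: "d u u = 0"
  using dist_le_walk[of T "[u]" u u] by simp

lemma dist_eq_0_iff: "u \<in> V \<Longrightarrow> v \<in> V \<Longrightarrow> d u v = 0 \<longleftrightarrow> u = v"
  by (metis dist_self shortest_walk[OF reachable_vertices] length_0_conv last_ConsL
      list.sel(1) Suc_length_conv)

lemma dist_commute: "u \<in> V \<Longrightarrow> v \<in> V \<Longrightarrow> d u v = d v u"
proof -
  have "d b a \<le> d a b" if ab: "a \<in> V" "b \<in> V" for a b
  proof -
    obtain xs where xs: "walk T xs" "hd xs = a" "last xs = b" "length xs = Suc (d a b)"
      using shortest_walk[OF reachable_vertices[OF ab]] .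
    have "d b a + 1 \<le> length (rev xs)"
      by (rule dist_le_walk) (use xs walk_rev in \<open>auto simp: hd_rev last_rev\<close>)
    then show ?thesis using xs by simp
  qed
  then show "u \<in> V \<Longrightarrow> v \<in> V \<Longrightarrow> d u v = d v u" by (meson antisym)
qed

lemma dist_triangle: "u \<in> V \<Longrightarrow> v \<in> V \<Longrightarrow> w \<in> V \<Longrightarrow> d u w \<le> d u v + d v w"
proof -
  assume uvw: "u \<in> V" "v \<in> V" "w \<in> V"
  obtain xs where xs: "walk T xs" "hd xs = u" "last xs = v" "length xs = Suc (d u v)"
    using shortest_walk[OF reachable_vertices[OF uvw(1,2)]] .
  obtain ys where ys: "walk T ys" "hd ys = v" "last ys = w" "length ys = Suc (d v w)"
    using shortest_walk[OF reachable_vertices[OF uvw(2,3)]] .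
  have "d u w + 1 \<le> length (xs @ tl ys)"
  proof (rule dist_le_walk[OF walk_append[OF xs(1) ys(1)]])
    have "xs \<noteq> []" "ys \<noteq> []" using xs(1) ys(1) by auto
    then show "hd (xs @ tl ys) = u" "last (xs @ tl ys) = w"
      using hd_last_append_tl[of xs ys] xs ys by auto
  qed (use xs ys in simp)
  then show ?thesis using xs ys by simp
qed

lemma dist_edge: "{u, v} \<in> T \<Longrightarrow> d u v = 1"
proof -
  assume uv: "{u, v} \<in> T"
  have "d u v + 1 \<le> length [u, v]"
    by (rule dist_le_walk) (use uv in \<open>auto simp: walk_Cons_Cons\<close>)
  moreover have "d u v \<noteq> 0" using dist_eq_0_iff edge_vertices[OF uv] by blast
  ultimately show ?thesis by simp
qed

lemma step_towards:
  assumes "u \<in> V" "s \<in> V" "u \<noteq> s"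
  obtains v where "{u, v} \<in> T" "d u s = d v s + 1"
proof -
  obtain xs where xs: "walk T xs" "hd xs = u" "last xs = s" "length xs = Suc (d u s)"
    using shortest_walk[OF reachable_vertices[OF assms(1,2)]] .
  have "d u s \<noteq> 0" using assms dist_eq_0_iff by blast
  then obtain v rest where xs_eq: "xs = u # v # rest" using xs by (cases xs; cases "tl xs") auto
  have uv: "{u, v} \<in> T" using xs(1) xs_eq by (simp add: walk_Cons_Cons)
  have "d v s + 1 \<le> length (v # rest)"
    by (rule dist_le_walk) (use xs xs_eq walk_ConsD[of T u "v # rest"] in auto)
  moreover have "d u s \<le> d u v + d v s" using dist_triangle assms edge_vertices[OF uv] by blast
  ultimately show ?thesis using that uv dist_edge[OF uv] xs xs_eq by simp
qed

lemma edge_cut: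
  assumes uv: "{u, v} \<in> T"
  obtains A where "A \<subseteq> V" "u \<in> A" "v \<notin> A"
    "\<And>a b. a \<in> A \<Longrightarrow> b \<in> V - A \<Longrightarrow> d a b = d a u + 1 + d v b"
proof -
  define T' where "T' = T - {{u, v}}"
  define A where "A = {x\<in>V. reachable T' u x}"
  have uV: "u \<in> V" and vV: "v \<in> V" using edge_vertices[OF uv] by auto
  have u_in: "u \<in> A" using uV unfolding A_def by simp
  have v_notin: "v \<notin> A"
  proof
    assume "v \<in> A"
    then have step: "reachable T' u b" if "{a, b} \<in> T" "reachable T' u a" for a b
      using that reachable_edge[of T' u a b] unfolding A_def T'_def
      by (cases "{a, b} = {u, v}") (auto simp: doubleton_eq_iff)
    have "reachable T' u x" if xV: "x \<in> V" for x
    proof -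
      obtain xs where xs: "walk T xs" "hd xs = u" "last xs = x"
        using shortest_walk[OF reachable_vertices[OF uV xV]] .
      show ?thesis using reachable_along_walk[OF xs(1) _ step] xs(2,3) by simp
    qed
    then have "connected_graph V T'"
      unfolding connected_graph_def using reachable_sym reachable_trans by metis
    then show False using minimally_connected[OF uv] unfolding T'_def by blast
  qed
  have "d a b = d a u + 1 + d v b" if a: "a \<in> A" and b: "b \<in> V - A" for a b
  proof -
    have aV: "a \<in> V" using a unfolding A_def by simp
    have bV: "b \<in> V" using b by simp
    obtain xs where xs: "walk T xs" "hd xs = a" "last xs = b" "length xs = Suc (d a b)"
      using shortest_walk[OF reachable_vertices[OF aV bV]] .
    obtain i where i: "Suc i < length xs" "xs ! i \<in> A" "xs ! Suc i \<notin> A"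
      using walk_leaves_set[OF xs(1)] xs(2,3) a b by blast
    have edge_i: "{xs ! i, xs ! Suc i} \<in> T" using walk_nth_edge[OF xs(1) i(1)] .
    have "{xs ! i, xs ! Suc i} = {u, v}"
    proof (rule ccontr)
      assume "{xs ! i, xs ! Suc i} \<noteq> {u, v}"
      then have "{xs ! i, xs ! Suc i} \<in> T'" using edge_i unfolding T'_def by simp
      moreover have "reachable T' u (xs ! i)" using i(2) unfolding A_def by simp
      ultimately have "reachable T' u (xs ! Suc i)" by (rule reachable_edge[rotated])
      then show False using i(3) edge_vertices[OF edge_i] unfolding A_def by blast
    qed
    then have xs_i: "xs ! i = u" and xs_Suc_i: "xs ! Suc i = v"
      using i(2,3) u_in v_notin by (auto simp: doubleton_eq_iff)
    have "last (take (Suc i) xs) = u" using take_Suc_conv_app_nth[OF Suc_lessD[OF i(1)]] xs_i by simp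
    then have "d a u + 1 \<le> length (take (Suc i) xs)"
      using dist_le_walk[OF walk_take[OF xs(1) zero_less_Suc]] xs(1,2) by (simp add: hd_conv_nth)
    moreover have "d v b + 1 \<le> length (drop (Suc i) xs)"
      by (rule dist_le_walk) (use xs walk_drop[OF xs(1) i(1)] xs_Suc_i i in \<open>auto simp: hd_drop_conv_nth\<close>)
    moreover have "d a b \<le> d a u + 1 + d v b"
      using dist_triangle[OF aV uV, of b] dist_triangle[OF uV vV, of b] dist_edge[OF uv] b by simp
    ultimately show ?thesis using i(1) xs(4) by simp
  qed
  then show ?thesis using that[of A] u_in v_notin unfolding A_def by blast
qed

text \<open>Throughout, \<open>d v x = d u x + 1\<close> for a tree edge \<open>{u, v}\<close> expresses that \<open>x\<close> lies on the
  side of \<open>u\<close>.\<close>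

lemma edge_dist_cases:
  assumes "{u, v} \<in> T" "x \<in> V"
  shows "d v x = d u x + 1 \<or> d u x = d v x + 1"
proof -
  obtain A where A: "A \<subseteq> V" "u \<in> A" "v \<notin> A" "\<And>a b. a \<in> A \<Longrightarrow> b \<in> V - A \<Longrightarrow> d a b = d a u + 1 + d v b"
    using edge_cut[OF assms(1)] by blast
  have V: "u \<in> V" "v \<in> V" using edge_vertices[OF assms(1)] by auto
  show ?thesis
  proof (cases "x \<in> A")
    case True
    then have "d x v = d x u + 1 + d v v" using A(3,4) V by blast
    then show ?thesis using V assms(2) dist_commute by simp
  next
    case False
    then have "d u x = d u u + 1 + d v x" using A(2,4) assms(2) by blast
    then show ?thesis by simp
  qed
qed

lemma dist_through_edge:
  assumes "{u, v} \<in> T" "x \<in> V" "y \<in> V" "d v x = d u x + 1" "d u y = d v y + 1"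
  shows "d y x = d y u + d u x"
proof -
  obtain A where A: "A \<subseteq> V" "u \<in> A" "v \<notin> A" "\<And>a b. a \<in> A \<Longrightarrow> b \<in> V - A \<Longrightarrow> d a b = d a u + 1 + d v b"
    using edge_cut[OF assms(1)] by blast
  have V: "u \<in> V" "v \<in> V" using edge_vertices[OF assms(1)] by auto
  have "x \<in> A"
  proof (rule ccontr)
    assume "x \<notin> A"
    then have "d u x = d u u + 1 + d v x" using A(2,4) assms(2) by blast
    then show False using assms(4) by simp
  qed
  moreover have "y \<notin> A"
  proof
    assume "y \<in> A"
    then have "d y v = d y u + 1 + d v v" using A(3,4) V by blast
    then show False using assms(3,5) V dist_commute by simp
  qed
  ultimately have "d x y = d x u + 1 + d v y" using A(4) assms(3) by blast
  then show ?thesis using assms V dist_commute by simp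
qed

lemma same_side_off_path:
  assumes "{c, v} \<in> T" "s \<in> V" "x \<in> V" "d c s = d v s + 1" "d x s < d x c + d c s"
  shows "d c x = d v x + 1"
proof -
  have V: "c \<in> V" "v \<in> V" using edge_vertices[OF assms(1)] by auto
  have "d s x \<noteq> d s c + d c x" using assms(5) assms(2,3) V dist_commute by simp
  then show ?thesis using edge_dist_cases[OF assms(1,3)] dist_through_edge[OF assms(1,3,2)] assms(4)
    by blast
qed

lemma four_point_condition:
  assumes "p \<in> V" "q \<in> V" "r \<in> V" "s \<in> V"
  shows "d p q + d r s \<le> max (d p r + d q s) (d p s + d q r)"
  using assms
proof (induction "d p q" arbitrary: p rule: less_induct)
  case less
  show ?case
  proof (cases "p = q")
    case True
    then show ?thesis using dist_triangle[of r p s] dist_commute less.prems by simp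
  next
    case False
    obtain v where v: "{p, v} \<in> T" "d p q = d v q + 1"
      using step_towards[OF less.prems(1,2) False] .
    have vV: "v \<in> V" using edge_vertices[OF v(1)] by simp
    consider "d v r = d p r + 1" | "d v s = d p s + 1" | "d p r = d v r + 1" "d p s = d v s + 1"
      using edge_dist_cases[OF v(1)] less.prems by blast
    then show ?thesis
    proof cases
      case 1
      then have "d q r = d q p + d p r" using dist_through_edge[OF v(1)] v(2) less.prems by blast
      then show ?thesis using dist_triangle[of r p s] dist_commute less.prems by simp
    next
      case 2
      then have "d q s = d q p + d p s" using dist_through_edge[OF v(1)] v(2) less.prems by blast
      then show ?thesis using dist_triangle[of r p s] dist_commute less.prems by simp
    next
      case 3
      then show ?thesis using less.hyps[of v] v(2) vV less.prems by simp
    qed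
  qed
qed

end

locale cost_family = tree V T for V :: "'a set" and T +
  fixes I :: "'i set" and s t :: "'i \<Rightarrow> 'a" and w :: "'i \<Rightarrow> nat"
  assumes finite_I: "finite I" and I_nonempty: "I \<noteq> {}"
    and s_in_V: "i \<in> I \<Longrightarrow> s i \<in> V" and t_in_V: "i \<in> I \<Longrightarrow> t i \<in> V"
begin

definition cost :: "'i \<Rightarrow> 'a \<Rightarrow> nat" where
  "cost i x = d x (s i) + d x (t i) + w i"

definition max_cost :: "'a \<Rightarrow> nat" where
  "max_cost x = Max ((\<lambda>i. cost i x) ` I)"

lemma cost_le_max_cost: "i \<in> I \<Longrightarrow> cost i x \<le> max_cost x"
  unfolding max_cost_def using finite_I by (intro Max_ge) auto

lemma max_cost_attained:
  obtains i where "i \<in> I" "cost i x = max_cost x"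
proof -
  have "max_cost x \<in> (\<lambda>i. cost i x) ` I"
    unfolding max_cost_def using finite_I I_nonempty by (intro Max_in) auto
  then show ?thesis using that by auto
qed

lemma cost_lipschitz:
  assumes "i \<in> I" "x \<in> V" "y \<in> V"
  shows "cost i x \<le> cost i y + 2 * d x y"
proof -
  have "d x (s i) \<le> d x y + d y (s i)" "d x (t i) \<le> d x y + d y (t i)"
    using dist_triangle assms s_in_V t_in_V by blast+
  then show ?thesis unfolding cost_def by simp
qed

lemma max_cost_lipschitz:
  assumes "x \<in> V" "y \<in> V"
  shows "max_cost x \<le> max_cost y + 2 * d x y"
proof -
  obtain i where i: "i \<in> I" "cost i x = max_cost x" by (rule max_cost_attained)
  then show ?thesis using cost_lipschitz[OF i(1) assms] cost_le_max_cost[OF i(1), of y] by simp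
qed

lemma cost_beyond_rising_edge:
  assumes uv: "{u, v} \<in> T" and i: "i \<in> I" "cost i u < cost i v"
    and x: "x \<in> V" "d u x = d v x + 1"
  shows "cost i x = cost i v + 2 * d x v"
proof -
  have V: "u \<in> V" "v \<in> V" using edge_vertices[OF uv] by auto
  have s: "d v (s i) = d u (s i) + 1" and t: "d v (t i) = d u (t i) + 1"
    using edge_dist_cases[OF uv s_in_V[OF i(1)]] edge_dist_cases[OF uv t_in_V[OF i(1)]] i(2)
    unfolding cost_def by auto
  have "d x (s i) = d x u + d u (s i)" "d x (t i) = d x u + d u (t i)"
    using dist_through_edge[OF uv _ x(1) _ x(2)] s t s_in_V t_in_V i(1) by auto
  moreover have "d x u = d x v + 1" using x V dist_commute by simp
  ultimately show ?thesis using s t unfolding cost_def by simp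
qed

lemma rising_maximizer_covers_side:
  assumes uv: "{u, v} \<in> T" and i: "i \<in> I" "cost i u < cost i v" "cost i v = max_cost v"
    and x: "x \<in> V" "d u x = d v x + 1"
  shows "cost i x = max_cost x" "max_cost x = max_cost v + 2 * d x v"
proof -
  have "cost i x = max_cost v + 2 * d x v" using cost_beyond_rising_edge[OF uv i(1,2) x] i(3) by simp
  moreover have "max_cost x \<le> max_cost v + 2 * d x v"
    using max_cost_lipschitz x(1) edge_vertices[OF uv] by blast
  moreover have "cost i x \<le> max_cost x" using cost_le_max_cost i(1) .
  ultimately show "cost i x = max_cost x" "max_cost x = max_cost v + 2 * d x v" by simp_all
qed

lemma rising_edge_covers_side:
  assumes uv: "{u, v} \<in> T"
    and rising: "\<And>i. i \<in> I \<Longrightarrow> cost i v = max_cost v \<Longrightarrow> cost i u < cost i v"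
    and e: "e \<in> V" "d u e = d v e + 1" and j: "j \<in> I" "cost j e = max_cost e"
    and x: "x \<in> V" "d u x = d v x + 1"
  shows "cost j x = max_cost x"
proof -
  have vV: "v \<in> V" using edge_vertices[OF uv] by simp
  obtain i where i: "i \<in> I" "cost i v = max_cost v" by (rule max_cost_attained)
  have "max_cost e = max_cost v + 2 * d e v"
    using rising_maximizer_covers_side(2)[OF uv i(1) rising[OF i] i(2) e] .
  moreover have "cost j e \<le> cost j v + 2 * d e v" using cost_lipschitz j(1) e(1) vV by blast
  moreover have "cost j v \<le> max_cost v" using cost_le_max_cost j(1) .
  ultimately have jv: "cost j v = max_cost v" using j(2) by simp
  show ?thesis using rising_maximizer_covers_side(1)[OF uv j(1) rising[OF j(1) jv] jv x] .
qed

end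

locale cost_family_centre = cost_family V T I s t w
  for V :: "'a set" and T and I :: "'i set" and s t w +
  fixes z :: 'a and l :: 'i
  assumes z_in_V: "z \<in> V" and z_minimizes: "\<And>y. y \<in> V \<Longrightarrow> max_cost z \<le> max_cost y"
    and l_in_I: "l \<in> I" and l_at_z: "cost l z = max_cost z"
    and l_longest: "\<And>i. i \<in> I \<Longrightarrow> cost i z = max_cost z \<Longrightarrow>
      d (s i) (t i) + w i \<le> d (s l) (t l) + w l"
begin

lemma l_endpoints:
  assumes "{e, e'} = {s l, t l}"
  shows "e \<in> V" "e' \<in> V" "\<And>y. cost l y = d y e + d y e' + w l" "d e e' = d (s l) (t l)"
  using assms s_in_V[OF l_in_I] t_in_V[OF l_in_I] dist_commute
  by (auto simp: doubleton_eq_iff cost_def)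

lemma flat_maximizer_at_z:
  assumes zv: "{z, v} \<in> T" and i: "i \<in> I" "cost i v = max_cost v" "\<not> cost i z < cost i v"
  shows "cost i z = max_cost z" "d (s i) (t i) + w i = max_cost z"
proof -
  have vV: "v \<in> V" using edge_vertices[OF zv] by simp
  have flat: "cost i z = cost i v" "cost i z = max_cost z"
    using z_minimizes[OF vV] cost_le_max_cost[OF i(1), of z] i(2,3) by simp_all
  have si: "s i \<in> V" and ti: "t i \<in> V" using s_in_V t_in_V i(1) by auto
  consider "d v (s i) = d z (s i) + 1" "d z (t i) = d v (t i) + 1"
    | "d z (s i) = d v (s i) + 1" "d v (t i) = d z (t i) + 1"
    using edge_dist_cases[OF zv si] edge_dist_cases[OF zv ti] flat(1) unfolding cost_def by auto
  then have "d (s i) (t i) = d z (s i) + d z (t i)"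
  proof cases
    case 1
    then show ?thesis using dist_through_edge[OF zv si ti] dist_commute si ti z_in_V by simp
  next
    case 2
    then show ?thesis using dist_through_edge[OF zv ti si] dist_commute si ti z_in_V by simp
  qed
  then show "cost i z = max_cost z" "d (s i) (t i) + w i = max_cost z"
    using flat(2) unfolding cost_def by simp_all
qed

lemma cover_off_path:
  assumes e: "{e, e'} = {s l, t l}" "d e e' \<noteq> d e z + d z e'"
    and j: "j \<in> I" "cost j e = max_cost e" and x: "x \<in> V" "d x e < d x z + d z e"
  shows "cost j x = max_cost x"
proof -
  note l_e = l_endpoints[OF e(1)]
  have "z \<noteq> e" using x(2) by auto
  then obtain v where zv: "{z, v} \<in> T" "d z e = d v e + 1"
    using step_towards[OF z_in_V l_e(1)] by blast
  have "d e e' < d e z + d z e'" using e(2) dist_triangle[OF l_e(1) z_in_V l_e(2)] by simp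
  then have short: "d (s l) (t l) + w l < max_cost z"
    using l_at_z l_e(3)[of z] l_e(4) dist_commute[OF l_e(1) z_in_V] by simp
  have "cost i z < cost i v" if "i \<in> I" "cost i v = max_cost v" for i
    using flat_maximizer_at_z[OF zv(1) that] l_longest[OF that(1)] short by fastforce
  then show ?thesis
    using rising_edge_covers_side[OF zv(1) _ l_e(1) zv(2) j x(1)]
      same_side_off_path[OF zv(1) l_e(1) x(1) zv(2) x(2)] by blast
qed

lemma cover_at_junction:
  assumes e: "{e, e'} = {s l, t l}" "d e e' = d e z + d z e'"
    and uv: "{u, v} \<in> T" "d z v = d z u + 1" "d z v + d v e = d z e"
    and flat: "max_cost v = max_cost z"
    and x: "x \<in> V" "d u x = d v x + 1" "d x e = d x v + d v e"
  shows "cost l x = max_cost x"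
proof -
  note l_e = l_endpoints[OF e(1)]
  have V: "u \<in> V" "v \<in> V" using edge_vertices[OF uv(1)] by auto
  have "d e e' \<le> d e v + d v e'" "d v e' \<le> d v z + d z e'"
    using dist_triangle l_e(1,2) V z_in_V by blast+
  then have ve': "d v e' = d v z + d z e'" and eve': "d e e' = d e v + d v e'"
    using e(2) uv(3) dist_commute l_e(1,2) V z_in_V by simp_all
  have "d u e' \<le> d u z + d z e'" using dist_triangle V z_in_V l_e(2) by blast
  then have ue': "d v e' = d u e' + 1"
    using edge_dist_cases[OF uv(1) l_e(2)] ve' uv(2) dist_commute V z_in_V by auto
  have "d x e' = d x u + d u e'" using dist_through_edge[OF uv(1) l_e(2) x(1) ue' x(2)] .
  then have "d x e' = d x v + d v e'" using ue' x(2) dist_commute x(1) V by simp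
  then have "cost l x = cost l z + 2 * d x v"
    using l_e(3)[of x] l_e(3)[of z] x(3) eve' e(2) dist_commute l_e(1,2) V z_in_V by simp
  then have "cost l x = max_cost v + 2 * d x v" using l_at_z flat by simp
  then show ?thesis
    using max_cost_lipschitz[OF x(1) V(2)] cost_le_max_cost[OF l_in_I, of x] by simp
qed

text \<open>Induction along the path from \<open>z\<close> towards \<open>e\<close>, as long as \<open>max_cost\<close> stays at its minimum:
  it either rises at the next step or the path reaches the vertex where the path to \<open>x\<close> branches off.\<close>

lemma cover_along_path:
  assumes e: "{e, e'} = {s l, t l}" "d e e' = d e z + d z e'"
    and j: "j \<in> I" "cost j e = max_cost e"
    and u: "u \<in> V" "d z u + d u e = d z e" "max_cost u = max_cost z"
    and x: "x \<in> V" "d x e < d x u + d u e"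
  shows "cost l x = max_cost x \<or> cost j x = max_cost x"
  using u x
proof (induction "d u e" arbitrary: u rule: less_induct)
  case less
  have eV: "e \<in> V" using l_endpoints[OF e(1)] by simp
  have "u \<noteq> e" using less.prems(5) by auto
  then obtain v where uv: "{u, v} \<in> T" "d u e = d v e + 1"
    using step_towards[OF less.prems(1) eV] by blast
  have vV: "v \<in> V" using edge_vertices[OF uv(1)] by simp
  have xv: "d u x = d v x + 1"
    using same_side_off_path[OF uv(1) eV less.prems(4) uv(2) less.prems(5)] .
  have "d z v \<le> d z u + d u v" "d z e \<le> d z v + d v e"
    using dist_triangle less.prems(1) vV eV z_in_V by blast+
  then have zv: "d z v + d v e = d z e" "d z v = d z u + 1"
    using less.prems(2) uv dist_edge by simp_all
  show ?case
  proof (cases "max_cost z < max_cost v")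
    case True
    then have "cost i u < cost i v" if "i \<in> I" "cost i v = max_cost v" for i
      using cost_le_max_cost[OF that(1), of u] less.prems(3) that(2) by simp
    then show ?thesis using rising_edge_covers_side[OF uv(1) _ eV uv(2) j less.prems(4) xv] by blast
  next
    case False
    then have flat: "max_cost v = max_cost z" using z_minimizes[OF vV] by simp
    show ?thesis
    proof (cases "d x e < d x v + d v e")
      case True
      then show ?thesis using less.hyps[of v] uv(2) vV zv(1) flat less.prems(4) by simp
    next
      case False
      then have "d x e = d x v + d v e" using dist_triangle less.prems(4) vV eV by fastforce
      then show ?thesis using cover_at_junction[OF e uv(1) zv(2,1) flat less.prems(4) xv] by blast
    qed
  qed
qed

lemma cover_toward_endpoint:
  assumes e: "{e, e'} = {s l, t l}" and j: "j \<in> I" "cost j e = max_cost e"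
    and x: "x \<in> V" "d x e < d x z + d z e"
  shows "cost l x = max_cost x \<or> cost j x = max_cost x"
proof (cases "d e e' = d e z + d z e'")
  case True
  then show ?thesis using cover_along_path[OF e True j z_in_V _ _ x] by simp
next
  case False
  then show ?thesis using cover_off_path[OF e False j x] by blast
qed

lemma cover_through_z:
  assumes x: "x \<in> V" "d x (s l) = d x z + d z (s l)" "d x (t l) = d x z + d z (t l)"
  shows "cost l x = max_cost x"
proof -
  have "cost l x = max_cost z + 2 * d x z" using x(2,3) l_at_z unfolding cost_def by simp
  then show ?thesis
    using max_cost_lipschitz[OF x(1) z_in_V] cost_le_max_cost[OF l_in_I, of x] by simp
qed

lemma cover_by_l_and_endpoint_maximizers:
  assumes "j \<in> I" "cost j (s l) = max_cost (s l)" "k \<in> I" "cost k (t l) = max_cost (t l)"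
    and x: "x \<in> V"
  shows "cost l x = max_cost x \<or> cost j x = max_cost x \<or> cost k x = max_cost x"
proof -
  have sV: "s l \<in> V" and tV: "t l \<in> V" using s_in_V t_in_V l_in_I by auto
  consider "d x (s l) < d x z + d z (s l)" | "d x (t l) < d x z + d z (t l)"
    | "d x (s l) = d x z + d z (s l)" "d x (t l) = d x z + d z (t l)"
    using dist_triangle[OF x z_in_V sV] dist_triangle[OF x z_in_V tV] by fastforce
  then show ?thesis
  proof cases
    case 1
    then show ?thesis using cover_toward_endpoint[of "s l" "t l" j] assms by blast
  next
    case 2
    then show ?thesis using cover_toward_endpoint[OF insert_commute assms(3,4) x] by blast
  next
    case 3
    then show ?thesis using cover_through_z x by blast
  qed
qed

end

lemma (in cost_family) three_maximizers_cover:
  obtains i j k where "i \<in> I" "j \<in> I" "k \<in> I"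
    "\<And>x. x \<in> V \<Longrightarrow> cost i x = max_cost x \<or> cost j x = max_cost x \<or> cost k x = max_cost x"
proof -
  have "V \<noteq> {}" using I_nonempty s_in_V by blast
  then obtain z where z: "z \<in> V" "\<And>y. y \<in> V \<Longrightarrow> max_cost z \<le> max_cost y"
    using ex_is_arg_min_if_finite[OF finite_vertices, of max_cost] by (auto simp: is_arg_min_linorder)
  define active where "active = {i \<in> I. cost i z = max_cost z}"
  have "finite active" "active \<noteq> {}"
    using finite_I max_cost_attained[of z] unfolding active_def by auto
  then have "Max ((\<lambda>i. d (s i) (t i) + w i) ` active) \<in> (\<lambda>i. d (s i) (t i) + w i) ` active"
    by (intro Max_in) auto
  then obtain l where "l \<in> active" "d (s l) (t l) + w l = Max ((\<lambda>i. d (s i) (t i) + w i) ` active)"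
    by auto
  then have l: "l \<in> active" "\<And>i. i \<in> active \<Longrightarrow> d (s i) (t i) + w i \<le> d (s l) (t l) + w l"
    using \<open>finite active\<close> by auto
  interpret cost_family_centre V T I s t w z l
    using z l unfolding active_def by unfold_locales auto
  obtain j k where "j \<in> I" "cost j (s l) = max_cost (s l)" "k \<in> I" "cost k (t l) = max_cost (t l)"
    using max_cost_attained by metis
  then show ?thesis using that l_in_I cover_by_l_and_endpoint_maximizers by blast
qed

text \<open>\<open>stretch T x y (a, b)\<close> is the distance between \<open>a\<close> and \<open>b\<close> after \<open>(x, y)\<close> replaces the
  tree edge separating them.\<close>

definition stretch :: "'a set set \<Rightarrow> 'a \<Rightarrow> 'a \<Rightarrow> 'a \<times> 'a \<Rightarrow> nat" where
  "stretch T x y = (\<lambda>(a, b). dist T x a + 1 + dist T b y)"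

context tree
begin

lemma stretch_le_pair:
  assumes V: "x \<in> V" "y \<in> V" "a \<in> V" "b \<in> V" "a' \<in> V" "b' \<in> V" "a'' \<in> V" "b'' \<in> V"
    and le1: "d x a'' + d x a + d b'' b \<le> d x a + d x a' + d b b'"
    and le2: "d x a'' + d x a' + d b'' b' \<le> d x a + d x a' + d b b'"
  shows "stretch T x y (a'', b'') \<le> max (stretch T x y (a, b)) (stretch T x y (a', b'))"
proof -
  have "d b'' y + d b b' \<le> max (d b'' b + d y b') (d b'' b' + d y b)"
    using four_point_condition V by blast
  then show ?thesis using le1 le2 dist_commute V unfolding stretch_def by auto
qed

lemma max_stretch_in_pair:
  assumes S: "finite S" "S \<subseteq> V \<times> V" and g: "(a, b) \<in> S" "(a', b') \<in> S" and xy: "x \<in> V" "y \<in> V"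
    and pair_max: "\<And>a'' b'' c c'. (a'', b'') \<in> S \<Longrightarrow> (c, c') \<in> S \<Longrightarrow>
      d x a'' + d x c + d b'' c' \<le> d x a + d x a' + d b b'"
  shows "\<exists>g\<in>{(a, b), (a', b')}. stretch T x y g = Max (stretch T x y ` S)"
proof -
  have V: "a \<in> V" "b \<in> V" "a' \<in> V" "b' \<in> V" using S(2) g by auto
  have le: "stretch T x y k \<le> max (stretch T x y (a, b)) (stretch T x y (a', b'))" if k: "k \<in> S" for k
  proof (cases k)
    case (Pair a'' b'')
    then show ?thesis
      using stretch_le_pair[OF xy V _ _ pair_max pair_max] k g S(2) by blast
  qed
  obtain g where "g \<in> {(a, b), (a', b')}"
    "stretch T x y g = max (stretch T x y (a, b)) (stretch T x y (a', b'))"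
    by (metis insertI1 insertI2 max_def)
  moreover from this have "Max (stretch T x y ` S) = stretch T x y g"
    using le S(1) g by (intro Max_eqI) auto
  ultimately show ?thesis by auto
qed

lemma six_edges_attain_max_stretch:
  assumes "finite S" "S \<noteq> {}" "S \<subseteq> V \<times> V"
  shows "\<exists>C\<subseteq>S. card C \<le> 6 \<and> (\<forall>x\<in>V. \<forall>y\<in>V. \<exists>g\<in>C. stretch T x y g = Max (stretch T x y ` S))"
proof -
  interpret pairs: cost_family V T "S \<times> S" "fst \<circ> fst" "fst \<circ> snd" "\<lambda>(g, g'). d (snd g) (snd g')"
    using assms by unfold_locales auto
  obtain \<pi>\<^sub>1 \<pi>\<^sub>2 \<pi>\<^sub>3 where \<pi>: "\<pi>\<^sub>1 \<in> S \<times> S" "\<pi>\<^sub>2 \<in> S \<times> S" "\<pi>\<^sub>3 \<in> S \<times> S"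
    "\<And>x. x \<in> V \<Longrightarrow> \<exists>\<pi>\<in>{\<pi>\<^sub>1, \<pi>\<^sub>2, \<pi>\<^sub>3}. pairs.cost \<pi> x = pairs.max_cost x"
    using pairs.three_maximizers_cover by (metis insert_iff)
  define C where "C = set [fst \<pi>\<^sub>1, snd \<pi>\<^sub>1, fst \<pi>\<^sub>2, snd \<pi>\<^sub>2, fst \<pi>\<^sub>3, snd \<pi>\<^sub>3]"
  have "C \<subseteq> S" using \<pi>(1-3) unfolding C_def by auto
  moreover have "card C \<le> 6" unfolding C_def by (rule order_trans[OF card_length]) simp
  moreover have "\<exists>g\<in>C. stretch T x y g = Max (stretch T x y ` S)" if xy: "x \<in> V" "y \<in> V" for x y
  proof -
    obtain a b a' b' where \<pi>_max: "((a, b), (a', b')) \<in> {\<pi>\<^sub>1, \<pi>\<^sub>2, \<pi>\<^sub>3}"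
      "pairs.cost ((a, b), (a', b')) x = pairs.max_cost x"
      using \<pi>(4)[OF xy(1)] by (metis prod.collapse)
    have "d x a'' + d x c + d b'' c' \<le> d x a + d x a' + d b b'" if "(a'', b'') \<in> S" "(c, c') \<in> S"
      for a'' b'' c c'
      using pairs.cost_le_max_cost[of "((a'', b''), (c, c'))" x] that \<pi>_max(2)
      unfolding pairs.cost_def by auto
    moreover have "(a, b) \<in> C" "(a', b') \<in> C" using \<pi>_max(1) unfolding C_def by auto
    ultimately show ?thesis
      using max_stretch_in_pair[OF assms(1,3) _ _ xy] \<open>C \<subseteq> S\<close> by blast
  qed
  ultimately show ?thesis by blast
qed

end

theorem theorem1:
  fixes V :: "'a set" and E T :: "'a set set" and p q :: 'a
  assumes "graph V E"
    and "two_edge_connected V E"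
    and "spanning_tree V E T"
    and "{p, q} \<in> T"
  shows "\<exists>C \<subseteq> swap_edges V E T p q. card C \<le> 6 \<and>
           (\<forall>f \<in> swap_edges V E T p q. \<exists>g \<in> C. critical V E T p q g f)"
proof -
  \<comment> \<open>2-edge-connectivity only makes the swap edges nonempty; the bound holds without it.\<close>
  have "graph V T" using assms(1,3) unfolding graph_def spanning_tree_def by blast
  then interpret tree V T using assms(3) unfolding spanning_tree_def by unfold_locales auto
  define S where "S = swap_edges V E T p q"
  have S_V: "S \<subseteq> V \<times> V" unfolding S_def swap_edges_def side_def by auto
  have critical_iff: "critical V E T p q g (x, y) \<longleftrightarrow> stretch T x y g = Max (stretch T x y ` S)"
    for g x y unfolding critical_def stretch_def S_def by (cases g) simp
  show ?thesis
  proof (cases "S = {}")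
    case True
    then show ?thesis unfolding S_def by auto
  next
    case False
    have "finite S" using finite_vertices S_V finite_subset by blast
    then obtain C where C: "C \<subseteq> S" "card C \<le> 6"
      "\<forall>x\<in>V. \<forall>y\<in>V. \<exists>g\<in>C. stretch T x y g = Max (stretch T x y ` S)"
      using six_edges_attain_max_stretch[OF _ False S_V] by blast
    have "\<exists>g\<in>C. critical V E T p q g f" if "f \<in> S" for f
      using C(3) critical_iff S_V that by (cases f) blast
    then show ?thesis using C(1,2) unfolding S_def by blast
  qed
qed

end
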